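(* In the setting described in the context, there exist $\Delta t_0>0$ and a constant $C_S$, independent of $\Delta t$ (and of $K$), such that whenever $\Delta t=T/K\le\Delta t_0$, every solution $(\mathbf{m}^k,S^k)_{k=1,\dots,K}$ of the semi-discrete homogeneous Dirichlet problem satisfies $\|S^k\|_{L^{3/2}(\Omega)}\le C_S$ for all $0\le k\le K$.
   Context: Setting: $\Omega\subset\mathbb{R}^n$ bounded with the uniform $C^1$-regularity property, $T>0$, $V=W^3(\mathrm{div};\Omega):=\{\mathbf{v}\in(L^3)^n:\mathrm{div}\,\mathbf{v}\in L^3\}$, $Q=L^{3/2}(\Omega)$. $S^0\in W^{1,3/2}_0(\Omega)$; $\phi\in L^\infty(\Omega)$ with $0<\underline{\phi}\le\phi\le\overline{\phi}<\infty$ a.e. For each $t\in[0,T]$: $f(\cdot,t)\in L^3(\Omega)$; $\alpha(\cdot,t),\beta(\cdot,t),\gamma(\cdot,t)\in L^\infty(\Omega)$ with $0<\underline{\alpha}\le\alpha\le\overline{\alpha}<\infty$, $0<\underline{\beta}\le\beta\le\overline{\beta}<\infty$, $0<\underline{\gamma}\le\gamma\le\overline{\gamma}<\infty$ a.e.; and for all $t_1,t_2$: $\|\alpha(t_1)-\alpha(t_2)\|_{L^\infty}\le L(\alpha)|t_1-t_2|$, similarly for $\beta,\gamma$ (constants $L(\beta),L(\gamma)$), and $\|f(t_1)-f(t_2)\|_{L^3}\le L(f)|t_1-t_2|$. For $K\in\mathbb{N}$ put $\Delta t=T/K$, $t^k=k\Delta t$, $\alpha^k=\alpha(\cdot,t^k)$,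 and similarly $\beta^k,\gamma^k,f^k$; $\rho^k(p):=\gamma^k p/\sqrt{|p|}$ ($:=0$ where $p=0$). The semi-discrete homogeneous Dirichlet problem: given $S^0$, for $k=1,\dots,K$, $(\mathbf{m}^k,S^k)\in V\times Q$ satisfies $\int_\Omega(\alpha^k+\beta^k|\mathbf{m}^k|)(\mathbf{m}^k\cdot\mathbf{v})\,d\mathbf{x}-\int_\Omega\mathrm{div}(\mathbf{v})S^k\,d\mathbf{x}=0$ for all $\mathbf{v}\in V$, and $\int_\Omega\frac{\phi}{\Delta t}(\rho^k(S^k)-\rho^{k-1}(S^{k-1}))q\,d\mathbf{x}+\int_\Omega\mathrm{div}(\mathbf{m}^k)q\,d\mathbf{x}=\int_\Omega f^kq\,d\mathbf{x}$ for all $q\in Q$. *)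

theory Defs
  imports "HOL-Analysis.Analysis"
begin

text \<open>C-infinity on all of the space: a family Df of all iterated partial derivatives
  (Df is = partial derivative along the index list is), each Frechet differentiable
  with partial derivatives given by the family.\<close>
definition smooth_fun :: "(real^'n \<Rightarrow> real) \<Rightarrow> bool" where
  "smooth_fun f \<longleftrightarrow>
     (\<exists>Df :: 'n list \<Rightarrow> real^'n \<Rightarrow> real.
        Df [] = f \<and>
        (\<forall>is x. (Df is has_derivative (\<lambda>h. \<Sum>i\<in>UNIV. h $ i * Df (i # is) x)) (at x)))"

definition tsupport :: "(real^'n \<Rightarrow> real) \<Rightarrow> (real^'n) set" where
  "tsupport f = closure {x. f x \<noteq> 0}"

definition test_fn :: "(real^'n) set \<Rightarrow> (real^'n \<Rightarrow> real) \<Rightarrow> bool" where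
  "test_fn \<Omega> f \<longleftrightarrow> smooth_fun f \<and> compact (tsupport f) \<and> tsupport f \<subseteq> \<Omega>"

definition pderiv_i :: "'n \<Rightarrow> (real^'n \<Rightarrow> real) \<Rightarrow> real^'n \<Rightarrow> real" where
  "pderiv_i i f x = frechet_derivative f (at x) (axis i 1)"

definition grad :: "(real^'n \<Rightarrow> real) \<Rightarrow> real^'n \<Rightarrow> real^'n" where
  "grad f x = (\<chi> i. pderiv_i i f x)"

section \<open>Uniform C1-regularity (Adams, Sobolev Spaces, 4.10, with m = 1)\<close>

definition C1_map_on :: "(real^'n) set \<Rightarrow> (real^'n \<Rightarrow> real^'n) \<Rightarrow> bool" where
  "C1_map_on U F \<longleftrightarrow> (\<exists>D. (\<forall>x\<in>U. (F has_derivative D x) (at x)) \<and>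
      (\<forall>i k. continuous_on U (\<lambda>x. D x (axis k 1) $ i)))"

definition C1_bounded_on :: "(real^'n) set \<Rightarrow> (real^'n \<Rightarrow> real^'n) \<Rightarrow> real \<Rightarrow> bool" where
  "C1_bounded_on U F M \<longleftrightarrow> (\<forall>x\<in>U. \<forall>i. \<bar>F x $ i\<bar> \<le> M \<and>
      (\<forall>k. \<bar>frechet_derivative F (at x) (axis k 1) $ i\<bar> \<le> M))"

definition uniform_C1_regular :: "(real^'n) set \<Rightarrow> bool" where
  "uniform_C1_regular \<Omega> \<longleftrightarrow>
    (\<exists>(J :: nat set) (U :: nat \<Rightarrow> (real^'n) set) (\<Phi> :: nat \<Rightarrow> real^'n \<Rightarrow> real^'n)
       (\<Psi> :: nat \<Rightarrow> real^'n \<Rightarrow> real^'n) (i0 :: 'n) \<delta> M R.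
      \<comment> \<open>locally finite open cover of the boundary\<close>
      (\<forall>j\<in>J. open (U j)) \<and> frontier \<Omega> \<subseteq> (\<Union>j\<in>J. U j) \<and>
      (\<forall>x. \<exists>N. open N \<and> x \<in> N \<and> finite {j\<in>J. U j \<inter> N \<noteq> {}}) \<and>
      \<comment> \<open>one-to-one C1 maps of U j onto the unit ball, with inverses\<close>
      (\<forall>j\<in>J. bij_betw (\<Phi> j) (U j) (ball 0 1) \<and>
             (\<forall>x\<in>U j. \<Psi> j (\<Phi> j x) = x) \<and> (\<forall>y\<in>ball 0 1. \<Phi> j (\<Psi> j y) = y) \<and>
             C1_map_on (U j) (\<Phi> j) \<and> C1_map_on (ball 0 1) (\<Psi> j)) \<and>
      \<comment> \<open>(i)\<close>
      \<delta> > 0 \<and> {x\<in>\<Omega>. infdist x (frontier \<Omega>) < \<delta>} \<subseteq> (\<Union>j\<in>J. \<Psi> j ` ball 0 (1/2)) \<and>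
      \<comment> \<open>(ii)\<close>
      (\<forall>j\<in>J. \<Phi> j ` (U j \<inter> \<Omega>) = {y\<in>ball 0 1. y $ i0 > 0}) \<and>
      \<comment> \<open>(iii)\<close>
      (\<forall>j\<in>J. C1_bounded_on (U j) (\<Phi> j) M \<and> C1_bounded_on (ball 0 1) (\<Psi> j) M) \<and>
      \<comment> \<open>(iv): no R+1 distinct members of the cover have a common point\<close>
      (\<forall>I\<subseteq>J. finite I \<and> card I = Suc R \<longrightarrow> (\<Inter>j\<in>I. U j) = {}))"

definition Lp :: "(real^'n) set \<Rightarrow> real \<Rightarrow> (real^'n \<Rightarrow> real) \<Rightarrow> bool" where
  "Lp \<Omega> p f \<longleftrightarrow> f \<in> borel_measurable (lebesgue_on \<Omega>) \<and>
      integrable (lebesgue_on \<Omega>) (\<lambda>x. \<bar>f x\<bar> powr p)"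

definition Lp_norm :: "(real^'n) set \<Rightarrow> real \<Rightarrow> (real^'n \<Rightarrow> real) \<Rightarrow> real" where
  "Lp_norm \<Omega> p f = (\<integral>x. \<bar>f x\<bar> powr p \<partial>lebesgue_on \<Omega>) powr (1/p)"

definition Lp_vec :: "(real^'n) set \<Rightarrow> real \<Rightarrow> (real^'n \<Rightarrow> real^'n) \<Rightarrow> bool" where
  "Lp_vec \<Omega> p v \<longleftrightarrow> v \<in> borel_measurable (lebesgue_on \<Omega>) \<and>
      integrable (lebesgue_on \<Omega>) (\<lambda>x. norm (v x) powr p)"

definition Lp_vec_norm :: "(real^'n) set \<Rightarrow> real \<Rightarrow> (real^'n \<Rightarrow> real^'n) \<Rightarrow> real" where
  "Lp_vec_norm \<Omega> p v = (\<integral>x. norm (v x) powr p \<partial>lebesgue_on \<Omega>) powr (1/p)"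

definition Linf_between :: "(real^'n) set \<Rightarrow> real \<Rightarrow> real \<Rightarrow> (real^'n \<Rightarrow> real) \<Rightarrow> bool" where
  "Linf_between \<Omega> lo hi f \<longleftrightarrow> f \<in> borel_measurable (lebesgue_on \<Omega>) \<and>
      (AE x in lebesgue_on \<Omega>. lo \<le> f x \<and> f x \<le> hi)"

definition weak_div :: "(real^'n) set \<Rightarrow> (real^'n \<Rightarrow> real^'n) \<Rightarrow> (real^'n \<Rightarrow> real) \<Rightarrow> bool" where
  "weak_div \<Omega> v g \<longleftrightarrow> (\<forall>\<phi>. test_fn \<Omega> \<phi> \<longrightarrow>
      (\<integral>x. v x \<bullet> grad \<phi> x \<partial>lebesgue_on \<Omega>) = - (\<integral>x. g x * \<phi> x \<partial>lebesgue_on \<Omega>))"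

definition weak_grad :: "(real^'n) set \<Rightarrow> (real^'n \<Rightarrow> real) \<Rightarrow> (real^'n \<Rightarrow> real^'n) \<Rightarrow> bool" where
  "weak_grad \<Omega> u G \<longleftrightarrow> (\<forall>\<phi>. test_fn \<Omega> \<phi> \<longrightarrow> (\<forall>i.
      (\<integral>x. u x * pderiv_i i \<phi> x \<partial>lebesgue_on \<Omega>) = - (\<integral>x. G x $ i * \<phi> x \<partial>lebesgue_on \<Omega>)))"

definition W_div :: "(real^'n) set \<Rightarrow> real \<Rightarrow> (real^'n \<Rightarrow> real^'n) \<Rightarrow> (real^'n \<Rightarrow> real) \<Rightarrow> bool" where
  "W_div \<Omega> p v g \<longleftrightarrow> Lp_vec \<Omega> p v \<and> Lp \<Omega> p g \<and> weak_div \<Omega> v g"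

definition W1p0 :: "(real^'n) set \<Rightarrow> real \<Rightarrow> (real^'n \<Rightarrow> real) \<Rightarrow> bool" where
  "W1p0 \<Omega> p u \<longleftrightarrow> Lp \<Omega> p u \<and> (\<exists>G. Lp_vec \<Omega> p G \<and> weak_grad \<Omega> u G \<and>
      (\<exists>\<phi>s :: nat \<Rightarrow> real^'n \<Rightarrow> real. (\<forall>j. test_fn \<Omega> (\<phi>s j)) \<and>
         (\<lambda>j. Lp_norm \<Omega> p (\<lambda>x. \<phi>s j x - u x)) \<longlonglongrightarrow> 0 \<and>
         (\<lambda>j. Lp_vec_norm \<Omega> p (\<lambda>x. grad (\<phi>s j) x - G x)) \<longlonglongrightarrow> 0))"

definition rho :: "(real^'n \<Rightarrow> real \<Rightarrow> real) \<Rightarrow> real \<Rightarrow> real^'n \<Rightarrow> real \<Rightarrow> real" where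
  "rho \<gamma> t x p = (if p = 0 then 0 else \<gamma> x t * p / sqrt \<bar>p\<bar>)"

definition semidiscrete_solution ::
  "(real^'n) set \<Rightarrow> real \<Rightarrow> (real^'n \<Rightarrow> real) \<Rightarrow> (real^'n \<Rightarrow> real \<Rightarrow> real) \<Rightarrow>
   (real^'n \<Rightarrow> real \<Rightarrow> real) \<Rightarrow> (real^'n \<Rightarrow> real \<Rightarrow> real) \<Rightarrow> (real^'n \<Rightarrow> real \<Rightarrow> real) \<Rightarrow>
   (real^'n \<Rightarrow> real) \<Rightarrow> nat \<Rightarrow> (nat \<Rightarrow> real^'n \<Rightarrow> real^'n) \<Rightarrow> (nat \<Rightarrow> real^'n \<Rightarrow> real) \<Rightarrow> bool" where
  "semidiscrete_solution \<Omega> T \<phi> \<alpha> \<beta> \<gamma> f S0 K m S \<longleftrightarrow>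
    (let dt = T / real K in
     S 0 = S0 \<and>
     (\<forall>k\<in>{1..K}. let tk = real k * dt; tk' = real (k - 1) * dt in
        Lp \<Omega> (3/2) (S k) \<and>
        (\<exists>dm. W_div \<Omega> 3 (m k) dm \<and>
          (\<forall>v g. W_div \<Omega> 3 v g \<longrightarrow>
             (\<integral>x. (\<alpha> x tk + \<beta> x tk * norm (m k x)) * (m k x \<bullet> v x) \<partial>lebesgue_on \<Omega>)
             - (\<integral>x. g x * S k x \<partial>lebesgue_on \<Omega>) = 0) \<and>
          (\<forall>q. Lp \<Omega> (3/2) q \<longrightarrow>
             (\<integral>x. \<phi> x / dt * (rho \<gamma> tk x (S k x) - rho \<gamma> tk' x (S (k - 1) x)) * q x \<partial>lebesgue_on \<Omega>)
             + (\<integral>x. dm x * q x \<partial>lebesgue_on \<Omega>)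
             = (\<integral>x. f x tk * q x \<partial>lebesgue_on \<Omega>)))))"

end

theory Submission
  imports Defs
begin

text \<open>Testing the mass balance with \<open>q = S^k\<close> and the momentum equation with \<open>v = m^k\<close>
  turns the coupling term \<open>\<integral> div(m^k) S^k\<close> into \<open>\<integral> (\<alpha>^k + \<beta>^k |m^k|) |m^k|^2 \<ge> 0\<close>.
  Since \<open>\<rho>^k(s) s = \<gamma>^k |s|^(3/2)\<close>, Young's inequality \<open>u w^2 \<le> u^3/3 + 2 w^3/3\<close> and the
  Lipschitz continuity of \<open>\<gamma>\<close> give, for the energy \<open>E_k = \<integral> \<phi> \<gamma>^k |S^k|^(3/2) / 3\<close>, the
  implicit recursion \<open>E_k \<le> E_(k-1) + \<Delta>t F + \<Delta>t c E_k\<close>, where the Lipschitz continuity of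
  \<open>f\<close> bounds \<open>F \<ge> \<integral> |f^k|^3 / 3\<close> uniformly in \<open>k\<close>. For \<open>c \<Delta>t \<le> 1/2\<close> a discrete Gronwall
  argument gives \<open>E_k \<le> exp(2cT) (E_0 + T F)\<close>, and \<open>E_k\<close> dominates a multiple of
  \<open>\<parallel>S^k\<parallel>^(3/2)\<close> in \<open>L^(3/2)\<close>.\<close>

lemma young_cube:
  fixes u w :: real
  assumes "0 \<le> u" "0 \<le> w"
  shows "u * w ^ 2 \<le> u ^ 3 / 3 + 2 * w ^ 3 / 3"
proof -
  have "0 \<le> (u - w) ^ 2 * (u + 2 * w)" using assms by simp
  then show ?thesis by (simp add: power2_eq_square power3_eq_cube algebra_simps)
qed

lemma mult_le_young_cube: "(c::real) * a \<le> \<bar>c\<bar> ^ 3 / 3 + 2 * sqrt \<bar>a\<bar> ^ 3 / 3"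
proof -
  have "c * a \<le> \<bar>c * a\<bar>" by (rule abs_ge_self)
  also have "\<dots> = \<bar>c\<bar> * sqrt \<bar>a\<bar> ^ 2" by (simp add: abs_mult)
  also have "\<dots> \<le> \<bar>c\<bar> ^ 3 / 3 + 2 * sqrt \<bar>a\<bar> ^ 3 / 3" by (rule young_cube) auto
  finally show ?thesis .
qed

lemma abs_add_cube_le: "\<bar>(x::real) + y\<bar> ^ 3 \<le> 4 * (\<bar>x\<bar> ^ 3 + \<bar>y\<bar> ^ 3)"
proof -
  have "\<bar>x + y\<bar> ^ 3 \<le> (\<bar>x\<bar> + \<bar>y\<bar>) ^ 3" by (intro power_mono abs_triangle_ineq) auto
  also have "\<dots> \<le> 4 * (\<bar>x\<bar> ^ 3 + \<bar>y\<bar> ^ 3)"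
  proof -
    define u v where "u = \<bar>x\<bar>" and "v = \<bar>y\<bar>"
    have "0 \<le> 3 * (u + v) * (u - v) ^ 2" by (simp add: u_def v_def)
    then show ?thesis unfolding u_def[symmetric] v_def[symmetric]
      by (simp add: power2_eq_square power3_eq_cube algebra_simps)
  qed
  finally show ?thesis .
qed

text \<open>Isabelle's \<open>sqrt\<close> is odd, \<open>sqrt s = sgn s * sqrt \<bar>s\<bar>\<close>, so it is exactly the nonlinearity
  \<open>s / sqrt \<bar>s\<bar>\<close> of \<open>\<rho>\<close>.\<close>

lemma rho_eq_sqrt: "rho \<gamma> t x s = \<gamma> x t * sqrt s"
proof -
  have "s / sqrt \<bar>s\<bar> = sqrt s"
  proof (cases "s < 0")
    case True
    have "(- s) / sqrt (- s) = sqrt (- s)" by (rule real_div_sqrt) (use True in simp)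
    then show ?thesis using True by (simp add: real_sqrt_minus)
  qed (simp add: real_div_sqrt)
  then show ?thesis by (simp add: rho_def flip: times_divide_eq_right)
qed

lemma sqrt_mult_self_eq: "sqrt a * a = sqrt \<bar>a\<bar> ^ 3"
proof (cases "a \<ge> 0")
  case True
  then show ?thesis by (simp add: power3_eq_cube)
next
  case False
  then show ?thesis by (simp add: power3_eq_cube real_sqrt_minus)
qed

lemma abs_sqrt_mult_eq: "\<bar>sqrt b * a\<bar> = sqrt \<bar>b\<bar> * sqrt \<bar>a\<bar> ^ 2"
  by (simp only: abs_mult real_sqrt_abs'[symmetric] real_sqrt_pow2 abs_ge_zero)

lemma abs_powr_three_halves: "\<bar>s::real\<bar> powr (3/2) = sqrt \<bar>s\<bar> ^ 3"
proof -
  have "\<bar>s\<bar> powr (3/2) = (\<bar>s\<bar> powr (1/2)) powr 3" by (simp add: powr_powr)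
  also have "\<dots> = sqrt \<bar>s\<bar> ^ 3" by (simp add: powr_half_sqrt powr_numeral)
  finally show ?thesis .
qed

text \<open>Pointwise lower bound for \<open>\<phi> (\<rho>^k(S^k) - \<rho>^(k-1)(S^(k-1))) S^k / \<Delta>t\<close>.\<close>

lemma time_difference_ge:
  fixes p g0 g1 a b dt L :: real
  assumes "0 \<le> p" "0 < dt" "0 \<le> g0" "g0 \<le> g1 + L * dt"
  shows "(p * g1 * sqrt \<bar>a\<bar> ^ 3 / 3 - p * g0 * sqrt \<bar>b\<bar> ^ 3 / 3) / dt - 2/3 * L * p * sqrt \<bar>a\<bar> ^ 3
    \<le> p / dt * (g1 * sqrt a - g0 * sqrt b) * a"
proof -
  define u w where "u = sqrt \<bar>b\<bar>" and "w = sqrt \<bar>a\<bar>"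
  have "sqrt b * a \<le> u * w ^ 2" using abs_sqrt_mult_eq[of b a] unfolding u_def w_def by linarith
  also have "\<dots> \<le> u ^ 3 / 3 + 2 * w ^ 3 / 3" by (rule young_cube) (auto simp: u_def w_def)
  finally have "g0 * (sqrt b * a) \<le> g0 * (u ^ 3 / 3 + 2 * w ^ 3 / 3)"
    using assms(3) by (rule mult_left_mono)
  then have b: "g0 * (sqrt b * a) \<le> g0 * u ^ 3 / 3 + 2/3 * (g0 * w ^ 3)"
    by (simp add: algebra_simps)
  have "g0 * w ^ 3 \<le> (g1 + L * dt) * w ^ 3"
    using assms(4) by (rule mult_right_mono) (simp add: w_def)
  then have g0: "g0 * w ^ 3 \<le> g1 * w ^ 3 + L * dt * w ^ 3" by (simp add: algebra_simps)
  have "(g1 * sqrt a - g0 * sqrt b) * a = g1 * w ^ 3 - g0 * (sqrt b * a)"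
    by (simp add: w_def algebra_simps flip: sqrt_mult_self_eq)
  with b g0 have "g1 * w ^ 3 / 3 - g0 * u ^ 3 / 3 - 2/3 * (L * dt * w ^ 3) \<le> (g1 * sqrt a - g0 * sqrt b) * a"
    by linarith
  then have "p / dt * (g1 * w ^ 3 / 3 - g0 * u ^ 3 / 3 - 2/3 * (L * dt * w ^ 3))
      \<le> p / dt * ((g1 * sqrt a - g0 * sqrt b) * a)"
    using assms(1,2) by (intro mult_left_mono) auto
  then show ?thesis using assms(2) by (simp add: u_def w_def field_simps)
qed

lemma abs_time_difference_le:
  fixes p g0 g1 a b dt :: real
  assumes "0 \<le> p" "p \<le> pu" "0 < dt" "0 \<le> g0" "g0 \<le> gu" "0 \<le> g1" "g1 \<le> gu"
  shows "\<bar>p / dt * (g1 * sqrt a - g0 * sqrt b) * a\<bar> \<le> pu / dt * gu * (2 * sqrt \<bar>a\<bar> ^ 3 + sqrt \<bar>b\<bar> ^ 3)"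
proof -
  define u w where "u = sqrt \<bar>b\<bar>" and "w = sqrt \<bar>a\<bar>"
  have u: "0 \<le> u" and w: "0 \<le> w" by (auto simp: u_def w_def)
  have "\<bar>sqrt b * a\<bar> \<le> u ^ 3 / 3 + 2 * w ^ 3 / 3"
    unfolding abs_sqrt_mult_eq u_def[symmetric] w_def[symmetric] using u w by (rule young_cube)
  also have "\<dots> \<le> u ^ 3 + w ^ 3" using zero_le_power[OF u, of 3] zero_le_power[OF w, of 3] by linarith
  finally have b: "\<bar>g0 * (sqrt b * a)\<bar> \<le> gu * (u ^ 3 + w ^ 3)"
    unfolding abs_mult using assms(4,5) by (intro mult_mono) auto
  have a: "\<bar>g1 * (sqrt a * a)\<bar> \<le> gu * w ^ 3"
    unfolding abs_mult sqrt_mult_self_eq w_def[symmetric] using assms(6,7) w by (intro mult_mono) auto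
  have "\<bar>(g1 * sqrt a - g0 * sqrt b) * a\<bar> \<le> gu * (2 * w ^ 3 + u ^ 3)"
    using abs_triangle_ineq4[of "g1 * (sqrt a * a)" "g0 * (sqrt b * a)"] a b
    by (simp add: algebra_simps)
  moreover have "\<bar>p / dt\<bar> \<le> pu / dt" using assms(1-3) by (simp add: divide_right_mono)
  ultimately have "\<bar>p / dt\<bar> * \<bar>(g1 * sqrt a - g0 * sqrt b) * a\<bar> \<le> pu / dt * (gu * (2 * w ^ 3 + u ^ 3))"
    by (intro mult_mono) (use assms in auto)
  then show ?thesis by (simp add: abs_mult u_def w_def mult.assoc)
qed

lemma implicit_discrete_gronwall:
  fixes E :: "nat \<Rightarrow> real"
  assumes step: "\<And>j. j < K \<Longrightarrow> E (Suc j) \<le> E j + h * F + h * c * E (Suc j)"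
    and nonneg: "\<And>j. j \<le> K \<Longrightarrow> 0 \<le> E j"
    and "0 \<le> h" "0 \<le> c" "c * h \<le> 1/2" "0 \<le> F" "j \<le> K"
  shows "E j \<le> exp (2 * c * (real j * h)) * (E 0 + real j * h * F)"
  using \<open>j \<le> K\<close>
proof (induction j)
  case (Suc j)
  have E: "0 \<le> E (Suc j)" by (rule nonneg[OF Suc.prems])
  have "1 \<le> (1 + 2 * c * h) * (1 - c * h)"
  proof -
    have "0 \<le> c * h * (1 - 2 * c * h)" using assms(3-5) by simp
    then show ?thesis by (simp add: algebra_simps)
  qed
  then have "1 * E (Suc j) \<le> ((1 + 2 * c * h) * (1 - c * h)) * E (Suc j)"
    using E by (rule mult_right_mono)
  then have "E (Suc j) \<le> (1 + 2 * c * h) * ((1 - c * h) * E (Suc j))" by (simp add: mult.assoc)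
  also have "\<dots> \<le> exp (2 * c * h) * (E j + h * F)"
  proof (rule mult_mono)
    show "(1 - c * h) * E (Suc j) \<le> E j + h * F"
      using step[of j] Suc.prems by (simp add: algebra_simps)
    show "0 \<le> (1 - c * h) * E (Suc j)" using E assms(5) by simp
  qed (use exp_ge_add_one_self[of "2 * c * h"] in auto)
  also have "\<dots> \<le> exp (2 * c * h) * (exp (2 * c * (real j * h)) * (E 0 + real j * h * F) + h * F)"
    using Suc by simp
  also have "\<dots> \<le> exp (2 * c * h) * (exp (2 * c * (real j * h)) * (E 0 + real (Suc j) * h * F))"
  proof -
    have "1 \<le> exp (2 * c * (real j * h))" using assms(3,4) by simp
    then have "h * F \<le> exp (2 * c * (real j * h)) * (h * F)"
      using mult_right_mono[of 1 _ "h * F"] assms(3,6) by simp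
    then show ?thesis by (intro mult_left_mono) (auto simp: algebra_simps)
  qed
  also have "\<dots> = exp (2 * c * (real (Suc j) * h)) * (E 0 + real (Suc j) * h * F)"
    by (simp add: mult_exp_exp algebra_simps)
  finally show ?case .
qed simp

lemma Lp_three_halvesD:
  assumes "Lp \<Omega> (3/2) u"
  shows "u \<in> borel_measurable (lebesgue_on \<Omega>)" "integrable (lebesgue_on \<Omega>) (\<lambda>x. sqrt \<bar>u x\<bar> ^ 3)"
  using assms by (simp_all add: Lp_def abs_powr_three_halves)

lemma Lp_threeD:
  assumes "Lp \<Omega> 3 g"
  shows "g \<in> borel_measurable (lebesgue_on \<Omega>)" "integrable (lebesgue_on \<Omega>) (\<lambda>x. \<bar>g x\<bar> ^ 3)"
  using assms by (simp_all add: Lp_def powr_numeral)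

lemma Lp_norm_three_halves: "Lp_norm \<Omega> (3/2) u = (\<integral>x. sqrt \<bar>u x\<bar> ^ 3 \<partial>lebesgue_on \<Omega>) powr (2/3)"
  by (simp add: Lp_norm_def abs_powr_three_halves)

lemma integral_abs_cube_le_of_Lp_norm_le:
  assumes "Lp_norm \<Omega> 3 g \<le> C"
  shows "(\<integral>x. \<bar>g x\<bar> ^ 3 \<partial>lebesgue_on \<Omega>) \<le> C ^ 3"
proof -
  define X where "X = (\<integral>x. \<bar>g x\<bar> ^ 3 \<partial>lebesgue_on \<Omega>)"
  have "0 \<le> X" unfolding X_def by (rule integral_nonneg_AE) simp
  then have "X = (X powr (1/3)) ^ 3" by (simp add: powr_numeral[symmetric] powr_powr)
  also have "\<dots> \<le> C ^ 3"
    using assms by (intro power_mono) (simp_all add: Lp_norm_def X_def powr_numeral)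
  finally show ?thesis by (simp add: X_def)
qed

locale semidiscrete_problem =
  fixes \<Omega> :: "(real^'n) set" and T :: real and \<phi> S0 :: "real^'n \<Rightarrow> real"
    and \<alpha> \<beta> \<gamma> f :: "real^'n \<Rightarrow> real \<Rightarrow> real"
    and \<phi>l \<phi>u \<gamma>l \<gamma>u L\<gamma> Lf :: real
  assumes T_pos: "0 < T"
    and S0_Lp: "Lp \<Omega> (3/2) S0"
    and \<phi>l_pos: "0 < \<phi>l" and \<phi>l_le_\<phi>u: "\<phi>l \<le> \<phi>u" and \<phi>_bounds: "Linf_between \<Omega> \<phi>l \<phi>u \<phi>"
    and \<gamma>l_pos: "0 < \<gamma>l" and \<gamma>_bounds: "\<And>t. t \<in> {0..T} \<Longrightarrow> Linf_between \<Omega> \<gamma>l \<gamma>u (\<lambda>x. \<gamma> x t)"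
    and L\<gamma>_nonneg: "0 \<le> L\<gamma>"
    and \<gamma>_Lipschitz: "\<And>s t. s \<in> {0..T} \<Longrightarrow> t \<in> {0..T} \<Longrightarrow>
      AE x in lebesgue_on \<Omega>. \<bar>\<gamma> x s - \<gamma> x t\<bar> \<le> L\<gamma> * \<bar>s - t\<bar>"
    and \<alpha>\<beta>_nonneg: "\<And>t. t \<in> {0..T} \<Longrightarrow> AE x in lebesgue_on \<Omega>. 0 \<le> \<alpha> x t \<and> 0 \<le> \<beta> x t"
    and f_L3: "\<And>t. t \<in> {0..T} \<Longrightarrow> Lp \<Omega> 3 (\<lambda>x. f x t)"
    and Lf_nonneg: "0 \<le> Lf"
    and f_Lipschitz: "\<And>s t. s \<in> {0..T} \<Longrightarrow> t \<in> {0..T} \<Longrightarrow>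
      Lp_norm \<Omega> 3 (\<lambda>x. f x s - f x t) \<le> Lf * \<bar>s - t\<bar>"
begin

definition energy :: "real \<Rightarrow> (real^'n \<Rightarrow> real) \<Rightarrow> real" where
  "energy t u = (\<integral>x. \<phi> x * \<gamma> x t * sqrt \<bar>u x\<bar> ^ 3 / 3 \<partial>lebesgue_on \<Omega>)"

definition growth_rate :: real where
  "growth_rate = 2 * (1 + L\<gamma> * \<phi>u) / (\<phi>l * \<gamma>l)"

definition source_bound :: real where
  "source_bound = 4 * ((Lf * T) ^ 3 + (\<integral>x. \<bar>f x 0\<bar> ^ 3 \<partial>lebesgue_on \<Omega>)) / 3"

lemma growth_rate_pos: "0 < growth_rate"
  using \<phi>l_pos \<phi>l_le_\<phi>u \<gamma>l_pos L\<gamma>_nonneg unfolding growth_rate_def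
  by (intro divide_pos_pos) (auto intro!: add_pos_nonneg)

lemma source_bound_nonneg: "0 \<le> source_bound"
proof -
  have "0 \<le> (\<integral>x. \<bar>f x 0\<bar> ^ 3 \<partial>lebesgue_on \<Omega>)" by (rule integral_nonneg_AE) simp
  then show ?thesis using T_pos Lf_nonneg by (simp add: source_bound_def)
qed

lemma time_step_mem: "k \<le> K \<Longrightarrow> real k * (T / real K) \<in> {0..T}"
  using T_pos by (cases "K = 0") (auto simp: field_simps)

lemma \<phi>_measurable: "\<phi> \<in> borel_measurable (lebesgue_on \<Omega>)"
  and \<phi>_bounds_AE: "AE x in lebesgue_on \<Omega>. \<phi>l \<le> \<phi> x \<and> \<phi> x \<le> \<phi>u"
  using \<phi>_bounds by (simp_all add: Linf_between_def)

lemma \<gamma>_measurable: "t \<in> {0..T} \<Longrightarrow> (\<lambda>x. \<gamma> x t) \<in> borel_measurable (lebesgue_on \<Omega>)"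
  and \<gamma>_bounds_AE: "t \<in> {0..T} \<Longrightarrow> AE x in lebesgue_on \<Omega>. \<gamma>l \<le> \<gamma> x t \<and> \<gamma> x t \<le> \<gamma>u"
  using \<gamma>_bounds by (simp_all add: Linf_between_def)

lemma integrable_energy_density:
  assumes t: "t \<in> {0..T}" and u: "Lp \<Omega> (3/2) u"
  shows "integrable (lebesgue_on \<Omega>) (\<lambda>x. \<phi> x * \<gamma> x t * sqrt \<bar>u x\<bar> ^ 3 / 3)"
proof (rule Bochner_Integration.integrable_bound)
  note [measurable] = \<phi>_measurable \<gamma>_measurable[OF t] Lp_three_halvesD(1)[OF u]
  show "integrable (lebesgue_on \<Omega>) (\<lambda>x. \<phi>u * \<gamma>u * sqrt \<bar>u x\<bar> ^ 3)"
    using Lp_three_halvesD(2)[OF u] by simp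
  show "(\<lambda>x. \<phi> x * \<gamma> x t * sqrt \<bar>u x\<bar> ^ 3 / 3) \<in> borel_measurable (lebesgue_on \<Omega>)" by measurable
  show "AE x in lebesgue_on \<Omega>. norm (\<phi> x * \<gamma> x t * sqrt \<bar>u x\<bar> ^ 3 / 3) \<le> norm (\<phi>u * \<gamma>u * sqrt \<bar>u x\<bar> ^ 3)"
    using \<phi>_bounds_AE \<gamma>_bounds_AE[OF t]
  proof eventually_elim
    case (elim x)
    then have "\<phi> x * \<gamma> x t \<le> \<phi>u * \<gamma>u" and nonneg: "0 \<le> \<phi> x * \<gamma> x t"
      using \<phi>l_pos \<gamma>l_pos by (auto intro!: mult_mono)
    then have "\<phi> x * \<gamma> x t * sqrt \<bar>u x\<bar> ^ 3 \<le> \<phi>u * \<gamma>u * sqrt \<bar>u x\<bar> ^ 3"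
      by (intro mult_right_mono) auto
    moreover have "0 \<le> \<phi> x * \<gamma> x t * sqrt \<bar>u x\<bar> ^ 3" using nonneg by simp
    ultimately show ?case by simp
  qed
qed

lemma energy_nonneg:
  assumes "t \<in> {0..T}"
  shows "0 \<le> energy t u"
  unfolding energy_def
proof (rule integral_nonneg_AE)
  show "AE x in lebesgue_on \<Omega>. 0 \<le> \<phi> x * \<gamma> x t * sqrt \<bar>u x\<bar> ^ 3 / 3"
    using \<phi>_bounds_AE \<gamma>_bounds_AE[OF assms] by eventually_elim (use \<phi>l_pos \<gamma>l_pos in auto)
qed

lemma cube_integral_le_energy:
  assumes t: "t \<in> {0..T}" and u: "Lp \<Omega> (3/2) u"
  shows "\<phi>l * \<gamma>l * (\<integral>x. sqrt \<bar>u x\<bar> ^ 3 \<partial>lebesgue_on \<Omega>) \<le> 3 * energy t u"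
proof -
  have "(\<integral>x. \<phi>l * \<gamma>l * sqrt \<bar>u x\<bar> ^ 3 \<partial>lebesgue_on \<Omega>)
      \<le> (\<integral>x. 3 * (\<phi> x * \<gamma> x t * sqrt \<bar>u x\<bar> ^ 3 / 3) \<partial>lebesgue_on \<Omega>)"
  proof (rule integral_mono_AE)
    show "integrable (lebesgue_on \<Omega>) (\<lambda>x. \<phi>l * \<gamma>l * sqrt \<bar>u x\<bar> ^ 3)"
      using Lp_three_halvesD(2)[OF u] by simp
    show "integrable (lebesgue_on \<Omega>) (\<lambda>x. 3 * (\<phi> x * \<gamma> x t * sqrt \<bar>u x\<bar> ^ 3 / 3))"
      by (rule integrable_mult_right) (rule integrable_energy_density[OF t u])
    show "AE x in lebesgue_on \<Omega>. \<phi>l * \<gamma>l * sqrt \<bar>u x\<bar> ^ 3 \<le> 3 * (\<phi> x * \<gamma> x t * sqrt \<bar>u x\<bar> ^ 3 / 3)"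
      using \<phi>_bounds_AE \<gamma>_bounds_AE[OF t]
      by eventually_elim (use \<phi>l_pos \<gamma>l_pos in \<open>auto intro!: mult_right_mono mult_mono\<close>)
  qed
  then show ?thesis by (simp add: energy_def)
qed

lemma Lp_norm_le_energy:
  assumes t: "t \<in> {0..T}" and u: "Lp \<Omega> (3/2) u"
  shows "Lp_norm \<Omega> (3/2) u \<le> (3 * energy t u / (\<phi>l * \<gamma>l)) powr (2/3)"
proof -
  have "(\<integral>x. sqrt \<bar>u x\<bar> ^ 3 \<partial>lebesgue_on \<Omega>) \<le> 3 * energy t u / (\<phi>l * \<gamma>l)"
    using cube_integral_le_energy[OF t u] \<phi>l_pos \<gamma>l_pos by (simp add: field_simps)
  moreover have "0 \<le> (\<integral>x. sqrt \<bar>u x\<bar> ^ 3 \<partial>lebesgue_on \<Omega>)" by (rule integral_nonneg_AE) simp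
  ultimately show ?thesis unfolding Lp_norm_three_halves by (intro powr_mono2) auto
qed

lemma integral_time_difference_ge:
  assumes s: "s \<in> {0..T}" and t: "t \<in> {0..T}" and dt: "0 < dt" "\<bar>s - t\<bar> \<le> dt"
    and u: "Lp \<Omega> (3/2) u" and v: "Lp \<Omega> (3/2) v"
  shows "(energy t u - energy s v) / dt - 2/3 * L\<gamma> * \<phi>u * (\<integral>x. sqrt \<bar>u x\<bar> ^ 3 \<partial>lebesgue_on \<Omega>)
    \<le> (\<integral>x. \<phi> x / dt * (rho \<gamma> t x (u x) - rho \<gamma> s x (v x)) * u x \<partial>lebesgue_on \<Omega>)"
proof -
  note [measurable] = \<phi>_measurable \<gamma>_measurable[OF s] \<gamma>_measurable[OF t]
    Lp_three_halvesD(1)[OF u] Lp_three_halvesD(1)[OF v]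
  note iu = integrable_energy_density[OF t u] and iv = integrable_energy_density[OF s v]
    and iN = Lp_three_halvesD(2)[OF u] and iN' = Lp_three_halvesD(2)[OF v]
  have bounds: "AE x in lebesgue_on \<Omega>. \<phi>l \<le> \<phi> x \<and> \<phi> x \<le> \<phi>u \<and> \<gamma>l \<le> \<gamma> x t \<and> \<gamma> x t \<le> \<gamma>u
      \<and> \<gamma>l \<le> \<gamma> x s \<and> \<gamma> x s \<le> \<gamma>u \<and> \<gamma> x s \<le> \<gamma> x t + L\<gamma> * dt"
    using \<phi>_bounds_AE \<gamma>_bounds_AE[OF t] \<gamma>_bounds_AE[OF s] \<gamma>_Lipschitz[OF s t]
  proof eventually_elim
    case (elim x)
    have "L\<gamma> * \<bar>s - t\<bar> \<le> L\<gamma> * dt" using dt L\<gamma>_nonneg by (intro mult_left_mono)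
    then show ?case using elim by auto
  qed
  have iR: "integrable (lebesgue_on \<Omega>) (\<lambda>x. \<phi> x / dt * (\<gamma> x t * sqrt (u x) - \<gamma> x s * sqrt (v x)) * u x)"
  proof (rule Bochner_Integration.integrable_bound)
    show "integrable (lebesgue_on \<Omega>) (\<lambda>x. \<phi>u / dt * \<gamma>u * (2 * sqrt \<bar>u x\<bar> ^ 3 + sqrt \<bar>v x\<bar> ^ 3))"
      using iN iN' by simp
    show "AE x in lebesgue_on \<Omega>. norm (\<phi> x / dt * (\<gamma> x t * sqrt (u x) - \<gamma> x s * sqrt (v x)) * u x)
        \<le> norm (\<phi>u / dt * \<gamma>u * (2 * sqrt \<bar>u x\<bar> ^ 3 + sqrt \<bar>v x\<bar> ^ 3))"
      using bounds
    proof eventually_elim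
      case (elim x)
      then have "\<bar>\<phi> x / dt * (\<gamma> x t * sqrt (u x) - \<gamma> x s * sqrt (v x)) * u x\<bar>
          \<le> \<phi>u / dt * \<gamma>u * (2 * sqrt \<bar>u x\<bar> ^ 3 + sqrt \<bar>v x\<bar> ^ 3)"
        using \<phi>l_pos \<gamma>l_pos dt by (intro abs_time_difference_le) auto
      moreover have "0 \<le> \<phi>u / dt * \<gamma>u * (2 * sqrt \<bar>u x\<bar> ^ 3 + sqrt \<bar>v x\<bar> ^ 3)"
        using elim \<phi>l_pos \<gamma>l_pos dt by simp
      ultimately show ?case by (simp only: real_norm_def abs_of_nonneg)
    qed
  qed measurable
  have "(energy t u - energy s v) / dt - 2/3 * L\<gamma> * \<phi>u * (\<integral>x. sqrt \<bar>u x\<bar> ^ 3 \<partial>lebesgue_on \<Omega>)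
      = (\<integral>x. (\<phi> x * \<gamma> x t * sqrt \<bar>u x\<bar> ^ 3 / 3 - \<phi> x * \<gamma> x s * sqrt \<bar>v x\<bar> ^ 3 / 3) / dt
            - 2/3 * L\<gamma> * \<phi>u * sqrt \<bar>u x\<bar> ^ 3 \<partial>lebesgue_on \<Omega>)"
    using iu iv iN by (simp add: energy_def)
  also have "\<dots> \<le> (\<integral>x. \<phi> x / dt * (\<gamma> x t * sqrt (u x) - \<gamma> x s * sqrt (v x)) * u x \<partial>lebesgue_on \<Omega>)"
  proof (rule integral_mono_AE)
    show "integrable (lebesgue_on \<Omega>) (\<lambda>x. (\<phi> x * \<gamma> x t * sqrt \<bar>u x\<bar> ^ 3 / 3
        - \<phi> x * \<gamma> x s * sqrt \<bar>v x\<bar> ^ 3 / 3) / dt - 2/3 * L\<gamma> * \<phi>u * sqrt \<bar>u x\<bar> ^ 3)"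
      using iu iv iN by simp
    show "AE x in lebesgue_on \<Omega>. (\<phi> x * \<gamma> x t * sqrt \<bar>u x\<bar> ^ 3 / 3 - \<phi> x * \<gamma> x s * sqrt \<bar>v x\<bar> ^ 3 / 3) / dt
        - 2/3 * L\<gamma> * \<phi>u * sqrt \<bar>u x\<bar> ^ 3
        \<le> \<phi> x / dt * (\<gamma> x t * sqrt (u x) - \<gamma> x s * sqrt (v x)) * u x"
      using bounds
    proof eventually_elim
      case (elim x)
      have "L\<gamma> * \<phi> x * sqrt \<bar>u x\<bar> ^ 3 \<le> L\<gamma> * \<phi>u * sqrt \<bar>u x\<bar> ^ 3"
        using elim L\<gamma>_nonneg by (intro mult_right_mono mult_left_mono) auto
      moreover have "(\<phi> x * \<gamma> x t * sqrt \<bar>u x\<bar> ^ 3 / 3 - \<phi> x * \<gamma> x s * sqrt \<bar>v x\<bar> ^ 3 / 3) / dt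
          - 2/3 * L\<gamma> * \<phi> x * sqrt \<bar>u x\<bar> ^ 3
          \<le> \<phi> x / dt * (\<gamma> x t * sqrt (u x) - \<gamma> x s * sqrt (v x)) * u x"
        using elim \<phi>l_pos \<gamma>l_pos dt by (intro time_difference_ge) auto
      ultimately show ?case by linarith
    qed
  qed (rule iR)
  finally show ?thesis by (simp add: rho_eq_sqrt)
qed

lemma integral_source_le:
  assumes t: "t \<in> {0..T}" and u: "Lp \<Omega> (3/2) u"
  shows "(\<integral>x. f x t * u x \<partial>lebesgue_on \<Omega>)
    \<le> (\<integral>x. \<bar>f x t\<bar> ^ 3 \<partial>lebesgue_on \<Omega>) / 3 + 2/3 * (\<integral>x. sqrt \<bar>u x\<bar> ^ 3 \<partial>lebesgue_on \<Omega>)"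
proof -
  note i = Lp_threeD(2)[OF f_L3[OF t]] Lp_three_halvesD(2)[OF u]
  have "(\<integral>x. f x t * u x \<partial>lebesgue_on \<Omega>)
      \<le> (\<integral>x. \<bar>f x t\<bar> ^ 3 / 3 + 2 * sqrt \<bar>u x\<bar> ^ 3 / 3 \<partial>lebesgue_on \<Omega>)"
    by (rule integral_mono_AE') (use i mult_le_young_cube in simp_all)
  also have "\<dots> = (\<integral>x. \<bar>f x t\<bar> ^ 3 \<partial>lebesgue_on \<Omega>) / 3 + 2/3 * (\<integral>x. sqrt \<bar>u x\<bar> ^ 3 \<partial>lebesgue_on \<Omega>)"
    using i by simp
  finally show ?thesis .
qed

lemma integral_source_cube_le:
  assumes t: "t \<in> {0..T}"
  shows "(\<integral>x. \<bar>f x t\<bar> ^ 3 \<partial>lebesgue_on \<Omega>) \<le> 3 * source_bound"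
proof -
  have T0: "0 \<in> {0..T}" using T_pos by simp
  note [measurable] = Lp_threeD(1)[OF f_L3[OF t]] Lp_threeD(1)[OF f_L3[OF T0]]
  note i = Lp_threeD(2)[OF f_L3[OF t]] Lp_threeD(2)[OF f_L3[OF T0]]
  have idiff: "integrable (lebesgue_on \<Omega>) (\<lambda>x. \<bar>f x t - f x 0\<bar> ^ 3)"
  proof (rule Bochner_Integration.integrable_bound)
    show "integrable (lebesgue_on \<Omega>) (\<lambda>x. 4 * (\<bar>f x t\<bar> ^ 3 + \<bar>f x 0\<bar> ^ 3))" using i by simp
    show "AE x in lebesgue_on \<Omega>. norm (\<bar>f x t - f x 0\<bar> ^ 3) \<le> norm (4 * (\<bar>f x t\<bar> ^ 3 + \<bar>f x 0\<bar> ^ 3))"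
      using abs_add_cube_le[of "f x t" "- f x 0" for x] by simp
  qed measurable
  have "(\<integral>x. \<bar>f x t\<bar> ^ 3 \<partial>lebesgue_on \<Omega>) \<le> (\<integral>x. 4 * (\<bar>f x t - f x 0\<bar> ^ 3 + \<bar>f x 0\<bar> ^ 3) \<partial>lebesgue_on \<Omega>)"
    by (rule integral_mono) (use i idiff abs_add_cube_le[of "f x t - f x 0" "f x 0" for x] in simp_all)
  also have "\<dots> = 4 * ((\<integral>x. \<bar>f x t - f x 0\<bar> ^ 3 \<partial>lebesgue_on \<Omega>) + (\<integral>x. \<bar>f x 0\<bar> ^ 3 \<partial>lebesgue_on \<Omega>))"
    using i idiff by simp
  also have "(\<integral>x. \<bar>f x t - f x 0\<bar> ^ 3 \<partial>lebesgue_on \<Omega>) \<le> (Lf * T) ^ 3"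
  proof (rule integral_abs_cube_le_of_Lp_norm_le)
    show "Lp_norm \<Omega> 3 (\<lambda>x. f x t - f x 0) \<le> Lf * T"
      using f_Lipschitz[OF t T0] t Lf_nonneg by (auto intro: order_trans mult_left_mono)
  qed
  finally show ?thesis by (simp add: source_bound_def)
qed

lemma semidiscrete_solution_Lp:
  assumes "semidiscrete_solution \<Omega> T \<phi> \<alpha> \<beta> \<gamma> f S0 K m S" "k \<le> K"
  shows "Lp \<Omega> (3/2) (S k)"
  using assms S0_Lp unfolding semidiscrete_solution_def Let_def by (cases "k = 0") auto

lemma semidiscrete_solution_tested_with_S:
  assumes sol: "semidiscrete_solution \<Omega> T \<phi> \<alpha> \<beta> \<gamma> f S0 K m S" and k: "k \<in> {1..K}"
  defines "dt \<equiv> T / real K"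
  obtains D where "0 \<le> D"
    and "(\<integral>x. \<phi> x / dt * (rho \<gamma> (real k * dt) x (S k x) - rho \<gamma> (real (k - 1) * dt) x (S (k - 1) x))
          * S k x \<partial>lebesgue_on \<Omega>) + D = (\<integral>x. f x (real k * dt) * S k x \<partial>lebesgue_on \<Omega>)"
proof -
  let ?t = "real k * dt"
  have t: "?t \<in> {0..T}" using k unfolding dt_def by (intro time_step_mem) simp
  obtain dm where "W_div \<Omega> 3 (m k) dm"
    and momentum: "\<And>v g. W_div \<Omega> 3 v g \<Longrightarrow>
      (\<integral>x. (\<alpha> x ?t + \<beta> x ?t * norm (m k x)) * (m k x \<bullet> v x) \<partial>lebesgue_on \<Omega>)
      - (\<integral>x. g x * S k x \<partial>lebesgue_on \<Omega>) = 0"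
    and mass: "\<And>q. Lp \<Omega> (3/2) q \<Longrightarrow>
      (\<integral>x. \<phi> x / dt * (rho \<gamma> ?t x (S k x) - rho \<gamma> (real (k - 1) * dt) x (S (k - 1) x)) * q x \<partial>lebesgue_on \<Omega>)
      + (\<integral>x. dm x * q x \<partial>lebesgue_on \<Omega>) = (\<integral>x. f x ?t * q x \<partial>lebesgue_on \<Omega>)"
    using sol k unfolding semidiscrete_solution_def Let_def dt_def[symmetric] by blast
  have "0 \<le> (\<integral>x. (\<alpha> x ?t + \<beta> x ?t * norm (m k x)) * (m k x \<bullet> m k x) \<partial>lebesgue_on \<Omega>)"
    by (rule integral_nonneg_AE, use \<alpha>\<beta>_nonneg[OF t] in eventually_elim) auto
  then have "0 \<le> (\<integral>x. dm x * S k x \<partial>lebesgue_on \<Omega>)"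
    using momentum[OF \<open>W_div \<Omega> 3 (m k) dm\<close>] by simp
  with mass[OF semidiscrete_solution_Lp[OF sol]] k show thesis by (intro that) auto
qed

lemma energy_step:
  assumes sol: "semidiscrete_solution \<Omega> T \<phi> \<alpha> \<beta> \<gamma> f S0 K m S" and k: "k \<in> {1..K}"
  defines "dt \<equiv> T / real K"
  shows "energy (real k * dt) (S k)
    \<le> energy (real (k - 1) * dt) (S (k - 1)) + dt * source_bound + dt * growth_rate * energy (real k * dt) (S k)"
proof -
  let ?t = "real k * dt" and ?t' = "real (k - 1) * dt"
  let ?N = "\<integral>x. sqrt \<bar>S k x\<bar> ^ 3 \<partial>lebesgue_on \<Omega>"
  have dt: "0 < dt" using k T_pos by (simp add: dt_def)
  have t: "?t \<in> {0..T}" using k unfolding dt_def by (intro time_step_mem) simp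
  have t': "?t' \<in> {0..T}" using k unfolding dt_def by (intro time_step_mem) auto
  have Sk: "Lp \<Omega> (3/2) (S k)" and Sk': "Lp \<Omega> (3/2) (S (k - 1))"
    using k semidiscrete_solution_Lp[OF sol] by auto
  obtain D where "0 \<le> D" and tested: "(\<integral>x. \<phi> x / dt * (rho \<gamma> ?t x (S k x) - rho \<gamma> ?t' x (S (k - 1) x))
      * S k x \<partial>lebesgue_on \<Omega>) + D = (\<integral>x. f x ?t * S k x \<partial>lebesgue_on \<Omega>)"
    using semidiscrete_solution_tested_with_S[OF sol k] unfolding dt_def by blast
  have "\<bar>?t' - ?t\<bar> \<le> dt" using k dt by (simp add: of_nat_diff algebra_simps)
  from integral_time_difference_ge[OF t' t dt this Sk Sk'] tested \<open>0 \<le> D\<close>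
    integral_source_le[OF t Sk] integral_source_cube_le[OF t]
  have "(energy ?t (S k) - energy ?t' (S (k - 1))) / dt \<le> source_bound + 2/3 * (1 + L\<gamma> * \<phi>u) * ?N"
    unfolding distrib_left distrib_right by linarith
  also have "2/3 * (1 + L\<gamma> * \<phi>u) * ?N \<le> 2/3 * (1 + L\<gamma> * \<phi>u) * (3 * energy ?t (S k) / (\<phi>l * \<gamma>l))"
    using cube_integral_le_energy[OF t Sk] \<phi>l_pos \<phi>l_le_\<phi>u \<gamma>l_pos L\<gamma>_nonneg
    by (intro mult_left_mono) (simp_all add: field_simps)
  finally have "(energy ?t (S k) - energy ?t' (S (k - 1))) / dt \<le> source_bound + growth_rate * energy ?t (S k)"
    by (simp add: growth_rate_def)
  then show ?thesis using dt by (simp add: pos_divide_le_eq algebra_simps)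
qed

lemma energy_bound:
  assumes "T / real K * growth_rate \<le> 1/2"
    and sol: "semidiscrete_solution \<Omega> T \<phi> \<alpha> \<beta> \<gamma> f S0 K m S" and "k \<le> K"
  shows "energy (real k * (T / real K)) (S k) \<le> exp (2 * growth_rate * T) * (energy 0 S0 + T * source_bound)"
proof -
  define dt where "dt = T / real K"
  have "energy (real k * dt) (S k)
      \<le> exp (2 * growth_rate * (real k * dt)) * (energy (real 0 * dt) (S 0) + real k * dt * source_bound)"
  proof (rule implicit_discrete_gronwall[where E = "\<lambda>j. energy (real j * dt) (S j)"])
    show "energy (real (Suc j) * dt) (S (Suc j))
        \<le> energy (real j * dt) (S j) + dt * source_bound + dt * growth_rate * energy (real (Suc j) * dt) (S (Suc j))"
      if "j < K" for j
      using energy_step[OF sol, of "Suc j"] that by (simp add: dt_def)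
    show "0 \<le> energy (real j * dt) (S j)" if "j \<le> K" for j
      using energy_nonneg time_step_mem[OF that] by (simp add: dt_def)
  qed (use assms T_pos growth_rate_pos source_bound_nonneg in \<open>simp_all add: dt_def mult.commute\<close>)
  also have "\<dots> \<le> exp (2 * growth_rate * T) * (energy 0 S0 + T * source_bound)"
  proof (rule mult_mono)
    have kdt: "real k * dt \<in> {0..T}" using time_step_mem[OF \<open>k \<le> K\<close>] by (simp add: dt_def)
    then show "exp (2 * growth_rate * (real k * dt)) \<le> exp (2 * growth_rate * T)"
      using growth_rate_pos by simp
    show "energy (real 0 * dt) (S 0) + real k * dt * source_bound \<le> energy 0 S0 + T * source_bound"
      using kdt sol source_bound_nonneg
      by (auto simp: semidiscrete_solution_def Let_def intro: mult_right_mono)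
    show "0 \<le> energy (real 0 * dt) (S 0) + real k * dt * source_bound"
      using kdt T_pos source_bound_nonneg by (intro add_nonneg_nonneg energy_nonneg) auto
  qed simp
  finally show ?thesis by (simp add: dt_def)
qed

theorem Lp_norm_uniformly_bounded:
  "\<exists>dt0 > 0. \<exists>CS. \<forall>K::nat. K > 0 \<and> T / real K \<le> dt0 \<longrightarrow>
     (\<forall>m S. semidiscrete_solution \<Omega> T \<phi> \<alpha> \<beta> \<gamma> f S0 K m S \<longrightarrow>
        (\<forall>k\<le>K. Lp_norm \<Omega> (3/2) (S k) \<le> CS))"
proof (intro exI conjI allI impI)
  define B where "B = exp (2 * growth_rate * T) * (energy 0 S0 + T * source_bound)"
  show "0 < 1 / (2 * growth_rate)" using growth_rate_pos by simp
  fix K :: nat and m S k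
  assume "0 < K \<and> T / real K \<le> 1 / (2 * growth_rate)" and k: "k \<le> K"
    and sol: "semidiscrete_solution \<Omega> T \<phi> \<alpha> \<beta> \<gamma> f S0 K m S"
  then have "T / real K * growth_rate \<le> 1 / (2 * growth_rate) * growth_rate"
    using growth_rate_pos by (intro mult_right_mono) auto
  then have E: "energy (real k * (T / real K)) (S k) \<le> B"
    unfolding B_def using growth_rate_pos by (intro energy_bound[OF _ sol k]) simp
  note t = time_step_mem[OF k]
  have "Lp_norm \<Omega> (3/2) (S k) \<le> (3 * energy (real k * (T / real K)) (S k) / (\<phi>l * \<gamma>l)) powr (2/3)"
    by (rule Lp_norm_le_energy[OF t semidiscrete_solution_Lp[OF sol k]])
  also have "\<dots> \<le> (3 * B / (\<phi>l * \<gamma>l)) powr (2/3)"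
    using E energy_nonneg[OF t] \<phi>l_pos \<gamma>l_pos by (intro powr_mono2 divide_right_mono) auto
  finally show "Lp_norm \<Omega> (3/2) (S k) \<le> (3 * B / (\<phi>l * \<gamma>l)) powr (2/3)" .
qed

end

theorem lemma3p1:
  fixes \<Omega> :: "(real^'n) set" and T :: real
    and \<phi> :: "real^'n \<Rightarrow> real" and S0 :: "real^'n \<Rightarrow> real"
    and \<alpha> \<beta> \<gamma> f :: "real^'n \<Rightarrow> real \<Rightarrow> real"
    and \<phi>l \<phi>u \<alpha>l \<alpha>u \<beta>l \<beta>u \<gamma>l \<gamma>u L\<alpha> L\<beta> L\<gamma> Lf :: real
  assumes "open \<Omega>" and "bounded \<Omega>" and "uniform_C1_regular \<Omega>"
    and "T > 0"
    and "W1p0 \<Omega> (3/2) S0"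
    and "0 < \<phi>l" "\<phi>l \<le> \<phi>u" "Linf_between \<Omega> \<phi>l \<phi>u \<phi>"
    and "0 < \<alpha>l" "\<alpha>l \<le> \<alpha>u" and "0 < \<beta>l" "\<beta>l \<le> \<beta>u" and "0 < \<gamma>l" "\<gamma>l \<le> \<gamma>u"
    and "\<And>t. t \<in> {0..T} \<Longrightarrow> Lp \<Omega> 3 (\<lambda>x. f x t)"
    and "\<And>t. t \<in> {0..T} \<Longrightarrow> Linf_between \<Omega> \<alpha>l \<alpha>u (\<lambda>x. \<alpha> x t)"
    and "\<And>t. t \<in> {0..T} \<Longrightarrow> Linf_between \<Omega> \<beta>l \<beta>u (\<lambda>x. \<beta> x t)"
    and "\<And>t. t \<in> {0..T} \<Longrightarrow> Linf_between \<Omega> \<gamma>l \<gamma>u (\<lambda>x. \<gamma> x t)"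
    and "\<And>t1 t2. t1 \<in> {0..T} \<Longrightarrow> t2 \<in> {0..T} \<Longrightarrow>
           AE x in lebesgue_on \<Omega>. \<bar>\<alpha> x t1 - \<alpha> x t2\<bar> \<le> L\<alpha> * \<bar>t1 - t2\<bar>"
    and "\<And>t1 t2. t1 \<in> {0..T} \<Longrightarrow> t2 \<in> {0..T} \<Longrightarrow>
           AE x in lebesgue_on \<Omega>. \<bar>\<beta> x t1 - \<beta> x t2\<bar> \<le> L\<beta> * \<bar>t1 - t2\<bar>"
    and "\<And>t1 t2. t1 \<in> {0..T} \<Longrightarrow> t2 \<in> {0..T} \<Longrightarrow>
           AE x in lebesgue_on \<Omega>. \<bar>\<gamma> x t1 - \<gamma> x t2\<bar> \<le> L\<gamma> * \<bar>t1 - t2\<bar>"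
    and "\<And>t1 t2. t1 \<in> {0..T} \<Longrightarrow> t2 \<in> {0..T} \<Longrightarrow>
           Lp_norm \<Omega> 3 (\<lambda>x. f x t1 - f x t2) \<le> Lf * \<bar>t1 - t2\<bar>"
  shows "\<exists>dt0 > 0. \<exists>CS. \<forall>K::nat. K > 0 \<and> T / real K \<le> dt0 \<longrightarrow>
           (\<forall>m S. semidiscrete_solution \<Omega> T \<phi> \<alpha> \<beta> \<gamma> f S0 K m S \<longrightarrow>
              (\<forall>k\<le>K. Lp_norm \<Omega> (3/2) (S k) \<le> CS))"
proof -
  interpret semidiscrete_problem \<Omega> T \<phi> S0 \<alpha> \<beta> \<gamma> f \<phi>l \<phi>u \<gamma>l \<gamma>u "max L\<gamma> 0" "\<bar>Lf\<bar>"
  proof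
    show "AE x in lebesgue_on \<Omega>. 0 \<le> \<alpha> x t \<and> 0 \<le> \<beta> x t" if "t \<in> {0..T}" for t
    proof -
      have "AE x in lebesgue_on \<Omega>. \<alpha>l \<le> \<alpha> x t" "AE x in lebesgue_on \<Omega>. \<beta>l \<le> \<beta> x t"
        using assms(16,17)[OF that] by (simp_all add: Linf_between_def)
      then show ?thesis by eventually_elim (use assms(9,11) in auto)
    qed
    show "AE x in lebesgue_on \<Omega>. \<bar>\<gamma> x s - \<gamma> x t\<bar> \<le> max L\<gamma> 0 * \<bar>s - t\<bar>"
      if "s \<in> {0..T}" "t \<in> {0..T}" for s t
    proof -
      have L: "L\<gamma> * \<bar>s - t\<bar> \<le> max L\<gamma> 0 * \<bar>s - t\<bar>" by (intro mult_right_mono) auto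
      show ?thesis using assms(21)[OF that] by eventually_elim (use L in linarith)
    qed
    show "Lp_norm \<Omega> 3 (\<lambda>x. f x s - f x t) \<le> \<bar>Lf\<bar> * \<bar>s - t\<bar>"
      if "s \<in> {0..T}" "t \<in> {0..T}" for s t
      using assms(22)[OF that] by (rule order_trans) (simp add: mult_right_mono)
  qed (use assms(4-8,13,15,18) in \<open>simp_all add: W1p0_def\<close>)
  show ?thesis by (rule Lp_norm_uniformly_bounded)
qed

end
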